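(* Let $k\ge3$, let $G=(V,E)$ be a $k$-uniform hypergraph with connected components $V_1,\dots,V_s$ ($s\ge1$), and let $\mathbf x\in\mathbb R^n$ be an H-eigenvector of the Laplacian tensor $\mathcal D-\mathcal A$ (respectively, of the signless Laplacian tensor $\mathcal D+\mathcal A$) corresponding to the eigenvalue $0$. Then for every $i\in[s]$ with $\mathbf x(V_i)\ne0$: $\mathbf x(V_i)$ is an H-eigenvector of $(\mathcal D-\mathcal A)(V_i)$ (respectively $(\mathcal D+\mathcal A)(V_i)$) corresponding to the eigenvalue $0$, $\mathrm{sup}(\mathbf x(V_i))=V_i$, and there is a real $c_i\neq0$ with $x_j\in\{c_i,-c_i\}$ for all $j\in V_i$.
   Context: A $k$-uniform hypergraph $G=(V,E)$ has vertex set $V=[n]$ ($n\ge k$) and nonempty edge set $E$ of $k$-element subsets; $E_i=\{e\in E:i\in e\}$, $d_i=|E_i|$. Connected components: maximal sets of vertices pairwise joined by chains of edges with consecutive edges intersecting; an isolated vertex (singleton) is also a component. $\mathcal A$: $a_{i_1\dots i_k}=\frac1{(k-1)!}$ if $\{i_1,\dots,i_k\}\in E$, else $0$; $\mathcal D$ diagonal with $d_{i\dots i}=d_i$; so $((\mathcal D\pm\mathcal A)\mathbf x^{k-1})_i=d_ix_i^{k-1}\pm\sum_{e\in E_i}\prod_{j\in e\setminus\{i\}}x_j$. A nonzero $\mathbf x$ is an eigenvector of $\mathcal T$ for $\lambda$ if $(\mathcal T\mathbf x^{k-1})_i=\lambda x_i^{k-1}$ for all $i$; an H-eigenvector is a real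 eigenvector. $\mathcal T(S)$ is the sub-tensor with indices restricted to $S$, $\mathbf x(S)=(x_j)_{j\in S}$, and $\mathrm{sup}(\mathbf x)=\{i:x_i\ne0\}$. *)

theory Defs
  imports Complex_Main
begin

definition uniform_hypergraph :: "nat \<Rightarrow> nat \<Rightarrow> nat set set \<Rightarrow> bool" where
  "uniform_hypergraph k n E \<longleftrightarrow> n \<ge> k \<and> E \<noteq> {} \<and>
     (\<forall>e\<in>E. e \<subseteq> {1..n} \<and> card e = k)"

definition degree :: "nat set set \<Rightarrow> nat \<Rightarrow> nat" where
  "degree E i = card {e\<in>E. i \<in> e}"

definition adj :: "nat set set \<Rightarrow> (nat \<times> nat) set" where
  "adj E = {(i, j). \<exists>e\<in>E. i \<in> e \<and> j \<in> e}"

text \<open>Connected components of the hypergraph on [n] (isolated vertices are singleton components).\<close>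
definition components :: "nat \<Rightarrow> nat set set \<Rightarrow> nat set set" where
  "components n E = {1..n} // ((adj E)\<^sup>* \<inter> ({1..n} \<times> {1..n}))"

text \<open>Order-k tensors are functions on index lists (of length k).\<close>
type_synonym tensor = "nat list \<Rightarrow> real"

definition adjacency_tensor :: "nat \<Rightarrow> nat set set \<Rightarrow> tensor" where
  "adjacency_tensor k E is =
     (if length is = k \<and> set is \<in> E then 1 / fact (k - 1) else 0)"

definition degree_tensor :: "nat \<Rightarrow> nat set set \<Rightarrow> tensor" where
  "degree_tensor k E is =
     (if length is = k \<and> is \<noteq> [] \<and> (\<forall>j\<in>set is. j = hd is) then real (degree E (hd is)) else 0)"

definition laplacian_tensor :: "nat \<Rightarrow> nat set set \<Rightarrow> tensor" where
  "laplacian_tensor k E is = degree_tensor k E is - adjacency_tensor k E is"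

definition signless_laplacian_tensor :: "nat \<Rightarrow> nat set set \<Rightarrow> tensor" where
  "signless_laplacian_tensor k E is = degree_tensor k E is + adjacency_tensor k E is"

text \<open>(T(S) x(S)^{k-1})_i: the tensor T restricted to the index set S applied to x(S).\<close>
definition tensor_apply :: "nat \<Rightarrow> tensor \<Rightarrow> nat set \<Rightarrow> (nat \<Rightarrow> real) \<Rightarrow> nat \<Rightarrow> real" where
  "tensor_apply k T S x i =
     (\<Sum>js\<in>{js. set js \<subseteq> S \<and> length js = k - 1}. T (i # js) * (\<Prod>l<length js. x (js ! l)))"

definition H_eigenvector :: "nat \<Rightarrow> tensor \<Rightarrow> nat set \<Rightarrow> real \<Rightarrow> (nat \<Rightarrow> real) \<Rightarrow> bool" where
  "H_eigenvector k T S lam x \<longleftrightarrow> (\<exists>i\<in>S. x i \<noteq> 0) \<and>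
     (\<forall>i\<in>S. tensor_apply k T S x i = lam * x i ^ (k - 1))"

definition support_on :: "nat set \<Rightarrow> (nat \<Rightarrow> real) \<Rightarrow> nat set" where
  "support_on S x = {i\<in>S. x i \<noteq> 0}"

end

theory Submission
  imports Defs "HOL-Combinatorics.Multiset_Permutations"
begin

text \<open>
  Both tensors have the form \<open>\<D> + \<sigma> \<A>\<close> with \<open>\<bar>\<sigma>\<bar> = 1\<close>, and their action at a vertex \<open>i\<close>
  only involves the edges through \<open>i\<close>, which lie in the component of \<open>i\<close>; so restricting to a
  component preserves the eigenvalue equation. Let \<open>m\<close> be the maximum of \<open>\<bar>x j\<bar>\<close> over a
  component, attained at \<open>i\<close>. The equation at \<open>i\<close> gives
  \<open>d\<^sub>i m\<^sup>k\<^sup>-\<^sup>1 = \<bar>\<Sum>\<^bsub>e \<ni> i\<^esub> \<Prod>\<^bsub>j \<in> e - {i}\<^esub> x j\<bar> \<le> \<Sum>\<^bsub>e \<ni> i\<^esub> \<Prod>\<^bsub>j \<in> e - {i}\<^esub> \<bar>x j\<bar> \<le> d\<^sub>i m\<^sup>k\<^sup>-\<^sup>1\<close>,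
  so every factor equals \<open>m\<close>. Hence the maximum spreads along edges, and by connectedness
  \<open>\<bar>x\<bar>\<close> is constant on the component.
\<close>

definition signed_laplacian_tensor :: "nat \<Rightarrow> nat set set \<Rightarrow> real \<Rightarrow> tensor" where
  "signed_laplacian_tensor k E \<sigma> is = degree_tensor k E is + \<sigma> * adjacency_tensor k E is"

definition adjacency_action :: "nat set set \<Rightarrow> (nat \<Rightarrow> real) \<Rightarrow> nat \<Rightarrow> real" where
  "adjacency_action E x i = (\<Sum>e\<in>{e\<in>E. i \<in> e}. \<Prod>j\<in>e - {i}. x j)"

lemma laplacian_tensors_signed:
  assumes "T = laplacian_tensor k E \<or> T = signless_laplacian_tensor k E"
  obtains \<sigma> :: real where "\<bar>\<sigma>\<bar> = 1" and "T = signed_laplacian_tensor k E \<sigma>"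
proof (cases "T = laplacian_tensor k E")
  case True
  then show ?thesis
    by (intro that[of "-1"]) (auto simp: fun_eq_iff laplacian_tensor_def signed_laplacian_tensor_def)
next
  case False
  then show ?thesis
    using assms by (intro that[of 1])
      (auto simp: fun_eq_iff signless_laplacian_tensor_def signed_laplacian_tensor_def)
qed

lemma tensor_apply_add_scaled:
  "tensor_apply k (\<lambda>is. T is + c * U is) S x i = tensor_apply k T S x i + c * tensor_apply k U S x i"
  unfolding tensor_apply_def by (simp add: sum.distrib sum_distrib_left algebra_simps)

lemma prod_nth_distinct:
  assumes "distinct js"
  shows "(\<Prod>l<length js. f (js ! l)) = (\<Prod>j\<in>set js. f j)"
proof -
  have "set js = (!) js ` {..<length js}" by (auto simp: set_conv_nth)
  moreover have "inj_on ((!) js) {..<length js}" using assms by (simp add: inj_on_nth)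
  ultimately show ?thesis by (simp add: prod.reindex)
qed

lemma tensor_apply_degree_tensor:
  assumes "k \<ge> 2" and "i \<in> S" and "finite S"
  shows "tensor_apply k (degree_tensor k E) S x i = real (degree E i) * x i ^ (k - 1)"
proof -
  let ?L = "{js. set js \<subseteq> S \<and> length js = k - 1}"
  let ?r = "replicate (k - 1) i"
  have "tensor_apply k (degree_tensor k E) S x i
      = (\<Sum>js\<in>?L. if js = ?r then real (degree E i) * (\<Prod>l<length js. x (js ! l)) else 0)"
    unfolding tensor_apply_def
  proof (rule sum.cong)
    fix js assume "js \<in> ?L"
    then have len: "length js = k - 1" by auto
    then have "(\<forall>j\<in>set (i # js). j = i) \<longleftrightarrow> js = ?r"
      by (auto simp: replicate_length_same[symmetric] intro: replicate_eqI)
    with len \<open>k \<ge> 2\<close> show "degree_tensor k E (i # js) * (\<Prod>l<length js. x (js ! l)) =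
       (if js = ?r then real (degree E i) * (\<Prod>l<length js. x (js ! l)) else 0)"
      by (auto simp: degree_tensor_def)
  qed simp
  also have "\<dots> = real (degree E i) * x i ^ (k - 1)"
    using assms by (auto simp: finite_lists_length_eq set_replicate_conv_if)
  finally show ?thesis .
qed

lemma extensions_to_set_eq_permutations:
  assumes "finite e" and "i \<in> e"
  shows "{js. length js = card e - 1 \<and> set (i # js) = e} = permutations_of_set (e - {i})"
proof (intro set_eqI iffI)
  fix js assume "js \<in> {js. length js = card e - 1 \<and> set (i # js) = e}"
  then have len: "length js = card e - 1" and ins: "insert i (set js) = e" by auto
  have "card e > 0" using assms card_gt_0_iff by blast
  have "card e \<le> Suc (card (set js))" unfolding ins[symmetric] by (simp add: card_insert_if)
  with len \<open>card e > 0\<close> card_length[of js] have card_js: "card (set js) = length js" by linarith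
  have "i \<notin> set js"
  proof
    assume "i \<in> set js"
    then have "set js = e" using ins by auto
    with card_js len \<open>card e > 0\<close> show False by simp
  qed
  with ins card_distinct[OF card_js] show "js \<in> permutations_of_set (e - {i})"
    by (auto simp: permutations_of_set_def)
next
  fix js assume "js \<in> permutations_of_set (e - {i})"
  with assms show "js \<in> {js. length js = card e - 1 \<and> set (i # js) = e}"
    by (auto simp: length_finite_permutations_of_set dest: permutations_of_setD)
qed

lemma tensor_apply_adjacency_tensor:
  assumes card: "\<forall>e\<in>E. card e = k" and "finite E" and "k \<ge> 2" and "i \<in> S" and "finite S"
  shows "tensor_apply k (adjacency_tensor k E) S x i = (\<Sum>e\<in>{e\<in>E. i \<in> e \<and> e \<subseteq> S}. \<Prod>j\<in>e - {i}. x j)"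
proof -
  let ?L = "{js. set js \<subseteq> S \<and> length js = k - 1}"
  let ?L' = "{js\<in>?L. set (i # js) \<in> E}"
  let ?f = "\<lambda>js. adjacency_tensor k E (i # js) * (\<Prod>l<length js. x (js ! l))"
  have fin_L: "finite ?L" using \<open>finite S\<close> by (rule finite_lists_length_eq)
  have "tensor_apply k (adjacency_tensor k E) S x i = sum ?f ?L'"
    unfolding tensor_apply_def
    by (rule sum.mono_neutral_right[OF fin_L]) (auto simp: adjacency_tensor_def)
  also have "\<dots> = (\<Sum>e\<in>{e\<in>E. i \<in> e \<and> e \<subseteq> S}. sum ?f {js\<in>?L'. set (i # js) = e})"
    by (rule sum.group[symmetric])
      (use fin_L \<open>finite E\<close> \<open>i \<in> S\<close> in \<open>auto intro: finite_subset[OF _ fin_L]\<close>)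
  also have "\<dots> = (\<Sum>e\<in>{e\<in>E. i \<in> e \<and> e \<subseteq> S}. \<Prod>j\<in>e - {i}. x j)"
  proof (rule sum.cong[OF refl])
    fix e assume e: "e \<in> {e\<in>E. i \<in> e \<and> e \<subseteq> S}"
    then have "card e = k" and "finite e" using card \<open>k \<ge> 2\<close> by (auto intro: card_ge_0_finite)
    then have card_e: "card (e - {i}) = k - 1" using e by auto
    have "{js\<in>?L'. set (i # js) = e} = permutations_of_set (e - {i})"
      using extensions_to_set_eq_permutations[OF \<open>finite e\<close>, of i] e \<open>card e = k\<close> by auto
    moreover have "?f js = (\<Prod>j\<in>e - {i}. x j) / fact (k - 1)"
      if "js \<in> permutations_of_set (e - {i})" for js
    proof -
      have "distinct js" and "set js = e - {i}" using that by (auto dest: permutations_of_setD)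
      moreover have "length js = k - 1"
        using that card_e by (simp add: length_finite_permutations_of_set)
      moreover have "set (i # js) = e" using \<open>set js = e - {i}\<close> e by auto
      moreover have "(\<Prod>l<length js. x (js ! l)) = (\<Prod>j\<in>e - {i}. x j)"
        using prod_nth_distinct[OF \<open>distinct js\<close>] \<open>set js = e - {i}\<close> by simp
      ultimately show ?thesis
        using e \<open>k \<ge> 2\<close> by (simp add: adjacency_tensor_def)
    qed
    ultimately show "sum ?f {js\<in>?L'. set (i # js) = e} = (\<Prod>j\<in>e - {i}. x j)"
      using \<open>finite e\<close> card_e by simp
  qed
  finally show ?thesis .
qed

lemma tensor_apply_signed_laplacian:
  assumes "\<forall>e\<in>E. card e = k" and "finite E" and "k \<ge> 2" and "i \<in> S" and "finite S"
    and "\<forall>e\<in>E. i \<in> e \<longrightarrow> e \<subseteq> S"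
  shows "tensor_apply k (signed_laplacian_tensor k E \<sigma>) S x i
           = real (degree E i) * x i ^ (k - 1) + \<sigma> * adjacency_action E x i"
proof -
  have "{e\<in>E. i \<in> e \<and> e \<subseteq> S} = {e\<in>E. i \<in> e}" using assms(6) by auto
  then show ?thesis
    using assms tensor_apply_degree_tensor tensor_apply_adjacency_tensor
    unfolding signed_laplacian_tensor_def[abs_def] tensor_apply_add_scaled adjacency_action_def
    by simp
qed

lemma prod_bounded_eq_power_imp_eq:
  fixes f :: "'a \<Rightarrow> real"
  assumes "finite A" and bounds: "\<forall>j\<in>A. 0 \<le> f j \<and> f j \<le> m"
    and prod_eq: "(\<Prod>j\<in>A. f j) = m ^ card A" and "m > 0" and "j \<in> A"
  shows "f j = m"
proof (rule ccontr)
  assume "f j \<noteq> m"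
  then have "f j < m" using bounds \<open>j \<in> A\<close> by auto
  have "(\<Prod>j\<in>A. f j) = f j * (\<Prod>j\<in>A - {j}. f j)"
    using assms by (simp add: prod.remove)
  also have "\<dots> \<le> f j * m ^ card (A - {j})"
    using bounds \<open>j \<in> A\<close> prod_mono[of "A - {j}" f "\<lambda>_. m"] by (simp add: mult_left_mono)
  also have "\<dots> < m * m ^ card (A - {j})"
    using \<open>f j < m\<close> \<open>m > 0\<close> by (simp add: mult_strict_right_mono)
  also have "\<dots> = m ^ card A"
    using assms by (metis card_Suc_Diff1 power_Suc)
  finally show False using prod_eq by simp
qed

lemma max_modulus_spreads_along_edge:
  assumes card: "\<forall>e\<in>E. card e = k" and "finite E" and "k \<ge> 2" and "\<bar>\<sigma>\<bar> = 1"
    and eigen: "real (degree E i) * x i ^ (k - 1) + \<sigma> * adjacency_action E x i = 0"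
    and max: "\<forall>e\<in>E. i \<in> e \<longrightarrow> (\<forall>j\<in>e. \<bar>x j\<bar> \<le> \<bar>x i\<bar>)" and "x i \<noteq> 0"
    and "e \<in> E" "i \<in> e" "j \<in> e"
  shows "\<bar>x j\<bar> = \<bar>x i\<bar>"
proof -
  let ?m = "\<bar>x i\<bar>"
  let ?Ei = "{e\<in>E. i \<in> e}"
  let ?P = "\<lambda>e. \<Prod>j\<in>e - {i}. \<bar>x j\<bar>"
  have fin: "finite e'" and card_e: "card (e' - {i}) = k - 1" if "e' \<in> ?Ei" for e'
    using that card \<open>k \<ge> 2\<close> by (auto intro: card_ge_0_finite)
  have P_le: "?P e' \<le> ?m ^ (k - 1)" if "e' \<in> ?Ei" for e'
    using that max card_e[OF that] prod_mono[of "e' - {i}" "\<lambda>j. \<bar>x j\<bar>" "\<lambda>_. ?m"] by auto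
  have "\<bar>real (degree E i) * x i ^ (k - 1)\<bar> = \<bar>\<sigma> * adjacency_action E x i\<bar>"
    using eigen by (simp add: eq_neg_iff_add_eq_0[symmetric])
  then have "real (degree E i) * ?m ^ (k - 1) = \<bar>adjacency_action E x i\<bar>"
    using \<open>\<bar>\<sigma>\<bar> = 1\<close> by (simp add: abs_mult power_abs)
  also have "\<dots> \<le> (\<Sum>e\<in>?Ei. ?P e)"
    unfolding adjacency_action_def by (rule order_trans[OF sum_abs]) (simp add: abs_prod)
  finally have "(\<Sum>e\<in>?Ei. ?m ^ (k - 1) - ?P e) \<le> 0"
    by (simp add: sum_subtractf degree_def)
  moreover have nonneg: "\<forall>e\<in>?Ei. 0 \<le> ?m ^ (k - 1) - ?P e" using P_le by simp
  ultimately have "(\<Sum>e\<in>?Ei. ?m ^ (k - 1) - ?P e) = 0"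
    using sum_nonneg[of ?Ei "\<lambda>e. ?m ^ (k - 1) - ?P e"] by simp
  then have "\<forall>e\<in>?Ei. ?m ^ (k - 1) - ?P e = 0"
    using sum_nonneg_eq_0_iff[of ?Ei "\<lambda>e. ?m ^ (k - 1) - ?P e"] nonneg \<open>finite E\<close> by auto
  then have P_eq: "?P e = ?m ^ card (e - {i})"
    using \<open>e \<in> E\<close> \<open>i \<in> e\<close> card_e by simp
  show ?thesis
  proof (cases "j = i")
    case False
    then have "j \<in> e - {i}" using \<open>j \<in> e\<close> by simp
    have bounds: "\<forall>j\<in>e - {i}. 0 \<le> \<bar>x j\<bar> \<and> \<bar>x j\<bar> \<le> ?m"
      using max \<open>e \<in> E\<close> \<open>i \<in> e\<close> by simp
    have "finite (e - {i})" using fin \<open>e \<in> E\<close> \<open>i \<in> e\<close> by simp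
    moreover have "?m > 0" using \<open>x i \<noteq> 0\<close> by simp
    ultimately show ?thesis
      using prod_bounded_eq_power_imp_eq[OF _ bounds P_eq _ \<open>j \<in> e - {i}\<close>] by blast
  qed simp
qed

lemma component_subset:
  assumes "C \<in> components n E"
  shows "C \<subseteq> {1..n}"
  using assms by (auto simp: components_def elim: quotientE)

lemma component_edge_closed:
  assumes "C \<in> components n E" and "\<forall>e\<in>E. e \<subseteq> {1..n}"
    and "i \<in> C" "e \<in> E" "i \<in> e" "j \<in> e"
  shows "j \<in> C"
proof -
  obtain a where "a \<in> {1..n}" and C: "C = ((adj E)\<^sup>* \<inter> {1..n} \<times> {1..n}) `` {a}"
    using assms(1) unfolding components_def by (auto elim: quotientE)
  have "(i, j) \<in> adj E" using assms by (auto simp: adj_def)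
  moreover have "(a, i) \<in> (adj E)\<^sup>*" using assms C by auto
  ultimately have "(a, j) \<in> (adj E)\<^sup>*" by simp
  moreover have "j \<in> {1..n}" using assms(2,4,6) by blast
  ultimately show ?thesis using C \<open>a \<in> {1..n}\<close> by auto
qed

lemma component_connected:
  assumes "C \<in> components n E" and "i \<in> C" "j \<in> C"
  shows "(i, j) \<in> (adj E)\<^sup>*"
proof -
  obtain a where C: "C = ((adj E)\<^sup>* \<inter> {1..n} \<times> {1..n}) `` {a}"
    using assms(1) unfolding components_def by (auto elim: quotientE)
  have "sym ((adj E)\<^sup>*)" by (intro sym_rtrancl) (auto simp: adj_def sym_def)
  moreover have "(a, i) \<in> (adj E)\<^sup>*" "(a, j) \<in> (adj E)\<^sup>*" using assms C by auto
  ultimately show ?thesis by (meson rtrancl_trans symD)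
qed

lemma component_edge_induct:
  assumes "C \<in> components n E" and "\<forall>e\<in>E. e \<subseteq> {1..n}"
    and "i\<^sub>0 \<in> C" and "P i\<^sub>0"
    and spread: "\<And>i e j. i \<in> C \<Longrightarrow> P i \<Longrightarrow> e \<in> E \<Longrightarrow> i \<in> e \<Longrightarrow> j \<in> e \<Longrightarrow> P j"
    and "j \<in> C"
  shows "P j"
proof -
  have "(i\<^sub>0, j) \<in> (adj E)\<^sup>*" using assms(1,3,6) by (rule component_connected)
  then have "j \<in> C \<and> P j"
  proof (induction rule: rtrancl_induct)
    case base
    show ?case using \<open>i\<^sub>0 \<in> C\<close> \<open>P i\<^sub>0\<close> ..
  next
    case (step y z)
    then obtain e where "e \<in> E" "y \<in> e" "z \<in> e" by (auto simp: adj_def)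
    with step.IH show ?case
      using component_edge_closed[OF assms(1,2)] spread[of y e z] by blast
  qed
  then show ?thesis by simp
qed

lemma component_constant_modulus:
  assumes "C \<in> components n E" and edges: "\<forall>e\<in>E. e \<subseteq> {1..n} \<and> card e = k"
    and "k \<ge> 2" and "\<bar>\<sigma>\<bar> = 1"
    and eigen: "\<forall>i\<in>C. real (degree E i) * x i ^ (k - 1) + \<sigma> * adjacency_action E x i = 0"
    and "\<exists>j\<in>C. x j \<noteq> 0"
  obtains m :: real where "m > 0" and "\<forall>j\<in>C. \<bar>x j\<bar> = m"
proof -
  have "finite C" using component_subset[OF assms(1)] finite_subset by blast
  have "finite E" using edges by (intro finite_subset[of E "Pow {1..n}"]) auto
  define m where "m = Max ((\<lambda>j. \<bar>x j\<bar>) ` C)"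
  have le_m: "\<bar>x j\<bar> \<le> m" if "j \<in> C" for j using that \<open>finite C\<close> by (auto simp: m_def)
  obtain i\<^sub>0 where "i\<^sub>0 \<in> C" "\<bar>x i\<^sub>0\<bar> = m"
    using Max_in[of "(\<lambda>j. \<bar>x j\<bar>) ` C"] \<open>finite C\<close> assms(6) unfolding m_def by fastforce
  have "m > 0" using assms(6) le_m by force
  have "\<bar>x j\<bar> = m" if "j \<in> C" for j
  proof (rule component_edge_induct[OF assms(1) _ \<open>i\<^sub>0 \<in> C\<close>, where P = "\<lambda>j. \<bar>x j\<bar> = m"])
    fix i e j assume "i \<in> C" "\<bar>x i\<bar> = m" "e \<in> E" "i \<in> e" "j \<in> e"
    have "\<forall>e\<in>E. i \<in> e \<longrightarrow> (\<forall>j\<in>e. \<bar>x j\<bar> \<le> \<bar>x i\<bar>)"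
      using \<open>i \<in> C\<close> \<open>\<bar>x i\<bar> = m\<close> le_m component_edge_closed[OF assms(1)] edges by blast
    moreover have "x i \<noteq> 0" using \<open>\<bar>x i\<bar> = m\<close> \<open>m > 0\<close> by auto
    ultimately have "\<bar>x j\<bar> = \<bar>x i\<bar>"
      using edges eigen \<open>i \<in> C\<close> \<open>e \<in> E\<close> \<open>i \<in> e\<close> \<open>j \<in> e\<close>
      by (intro max_modulus_spreads_along_edge[where \<sigma> = \<sigma>])
        (use \<open>finite E\<close> \<open>k \<ge> 2\<close> \<open>\<bar>\<sigma>\<bar> = 1\<close> in auto)
    then show "\<bar>x j\<bar> = m" using \<open>\<bar>x i\<bar> = m\<close> by simp
  qed (use edges \<open>\<bar>x i\<^sub>0\<bar> = m\<close> \<open>j \<in> C\<close> in auto)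
  with \<open>m > 0\<close> show thesis using that by blast
qed

theorem corollary4p1:
  fixes k n :: nat and E :: "nat set set" and x :: "nat \<Rightarrow> real" and T :: tensor
  assumes "k \<ge> 3"
    and "uniform_hypergraph k n E"
    and "T = laplacian_tensor k E \<or> T = signless_laplacian_tensor k E"
    and "H_eigenvector k T {1..n} 0 x"
  shows "\<forall>C \<in> components n E. (\<exists>j\<in>C. x j \<noteq> 0) \<longrightarrow>
           H_eigenvector k T C 0 x \<and> support_on C x = C \<and>
           (\<exists>c::real. c \<noteq> 0 \<and> (\<forall>j\<in>C. x j = c \<or> x j = - c))"
proof (intro ballI impI)
  fix C assume C: "C \<in> components n E" and nonzero: "\<exists>j\<in>C. x j \<noteq> 0"
  obtain \<sigma> where "\<bar>\<sigma>\<bar> = 1" and T: "T = signed_laplacian_tensor k E \<sigma>"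
    using assms(3) by (rule laplacian_tensors_signed)
  have edges: "\<forall>e\<in>E. e \<subseteq> {1..n} \<and> card e = k"
    using assms(2) by (auto simp: uniform_hypergraph_def)
  have "finite E" using edges by (intro finite_subset[of E "Pow {1..n}"]) auto
  have "C \<subseteq> {1..n}" using C by (rule component_subset)
  have apply_eq: "tensor_apply k T S x i = real (degree E i) * x i ^ (k - 1) + \<sigma> * adjacency_action E x i"
    if "S = C \<or> S = {1..n}" and "i \<in> C" for S i
    using that edges \<open>finite E\<close> assms(1) \<open>C \<subseteq> {1..n}\<close> component_edge_closed[OF C]
    unfolding T by (intro tensor_apply_signed_laplacian) (auto intro: finite_subset)
  have eigen: "\<forall>i\<in>C. real (degree E i) * x i ^ (k - 1) + \<sigma> * adjacency_action E x i = 0"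
  proof
    fix i assume "i \<in> C"
    then have "tensor_apply k T {1..n} x i = 0"
      using assms(4) \<open>C \<subseteq> {1..n}\<close> by (auto simp: H_eigenvector_def)
    with apply_eq[of "{1..n}" i] \<open>i \<in> C\<close>
    show "real (degree E i) * x i ^ (k - 1) + \<sigma> * adjacency_action E x i = 0" by simp
  qed
  obtain m where "m > 0" and modulus: "\<forall>j\<in>C. \<bar>x j\<bar> = m"
    using component_constant_modulus[OF C edges _ \<open>\<bar>\<sigma>\<bar> = 1\<close> eigen nonzero] assms(1) by auto
  show "H_eigenvector k T C 0 x \<and> support_on C x = C \<and>
           (\<exists>c::real. c \<noteq> 0 \<and> (\<forall>j\<in>C. x j = c \<or> x j = - c))"
  proof (intro conjI)
    show "H_eigenvector k T C 0 x"
      using nonzero eigen apply_eq by (simp add: H_eigenvector_def)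
    show "support_on C x = C"
      using modulus \<open>m > 0\<close> by (auto simp: support_on_def)
    show "\<exists>c::real. c \<noteq> 0 \<and> (\<forall>j\<in>C. x j = c \<or> x j = - c)"
      using modulus \<open>m > 0\<close> by (intro exI[of _ m]) (auto simp: abs_if split: if_splits)
  qed
qed

end
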